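(* Let $k$ be a field, $r\ge2$, and let $B$ be an $F_r$-Lie algebra satisfying $\Phi1$: $\forall x_1,\dots,x_4\ (x_1x_2)(x_3x_4)=0$, $\Phi2$: $\forall x,y\ (xyx=0\wedge xyy=0\to xy=0)$ and $\Phi3$: $\forall x,y,z\ (x\ne0\wedge xy=0\wedge xz=0\to yz=0)$. Let $c_1,\dots,c_n$, $n\le r$, be elements of the designated copy of $F_r$ which are linearly independent modulo $\mathrm{Fit}(F_r)$. Then $c_1,\dots,c_n$ are linearly independent modulo $\mathrm{Fit}(B)$.
   Context: $F_r$ is the free metabelian Lie algebra over $k$ of rank $r$ with free base $a_1,\dots,a_r$; an $F_r$-Lie algebra is a Lie algebra containing a designated copy of $F_r$. Products are left-normed. $\mathrm{Fit}(\cdot)$ denotes the Fitting radical (sum of all nilpotent ideals). *)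

theory Defs
  imports Complex_Main "HOL-Library.Function_Algebras"
begin

text \<open>Products are left-normed: xyz = br (br x y) z.\<close>

definition lie_algebra :: "('k::field \<Rightarrow> 'b::ab_group_add \<Rightarrow> 'b) \<Rightarrow> ('b \<Rightarrow> 'b \<Rightarrow> 'b) \<Rightarrow> bool" where
  "lie_algebra sc br \<longleftrightarrow> vector_space sc
     \<and> (\<forall>x y z. br (x + y) z = br x z + br y z)
     \<and> (\<forall>x y z. br x (y + z) = br x y + br x z)
     \<and> (\<forall>c x y. br (sc c x) y = sc c (br x y))
     \<and> (\<forall>c x y. br x (sc c y) = sc c (br x y))
     \<and> (\<forall>x. br x x = 0)
     \<and> (\<forall>x y z. br (br x y) z + br (br y z) x + br (br z x) y = 0)"

definition lie_subalgebra :: "('k::field \<Rightarrow> 'b::ab_group_add \<Rightarrow> 'b) \<Rightarrow> ('b \<Rightarrow> 'b \<Rightarrow> 'b) \<Rightarrow> 'b set \<Rightarrow> bool" where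
  "lie_subalgebra sc br A \<longleftrightarrow> module.subspace sc A \<and> (\<forall>x\<in>A. \<forall>y\<in>A. br x y \<in> A)"

definition metabelian_on :: "('b \<Rightarrow> 'b \<Rightarrow> 'b::zero) \<Rightarrow> 'b set \<Rightarrow> bool" where
  "metabelian_on br A \<longleftrightarrow> (\<forall>x1\<in>A. \<forall>x2\<in>A. \<forall>x3\<in>A. \<forall>x4\<in>A. br (br x1 x2) (br x3 x4) = 0)"

definition lie_ideal :: "('k::field \<Rightarrow> 'b::ab_group_add \<Rightarrow> 'b) \<Rightarrow> ('b \<Rightarrow> 'b \<Rightarrow> 'b) \<Rightarrow> 'b set \<Rightarrow> 'b set \<Rightarrow> bool" where
  "lie_ideal sc br L I \<longleftrightarrow> module.subspace sc I \<and> I \<subseteq> L \<and> (\<forall>x\<in>L. \<forall>y\<in>I. br x y \<in> I)"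

text \<open>Lower central series of a Lie algebra with carrier I:
  I^1 = I, I^(m+1) = span of products x y with x in I^m, y in I (indexed from 0 here).\<close>
fun lower_central :: "('k::field \<Rightarrow> 'b::ab_group_add \<Rightarrow> 'b) \<Rightarrow> ('b \<Rightarrow> 'b \<Rightarrow> 'b) \<Rightarrow> 'b set \<Rightarrow> nat \<Rightarrow> 'b set" where
  "lower_central sc br I 0 = I"
| "lower_central sc br I (Suc m) = module.span sc {br x y | x y. x \<in> lower_central sc br I m \<and> y \<in> I}"

definition lie_nilpotent :: "('k::field \<Rightarrow> 'b::ab_group_add \<Rightarrow> 'b) \<Rightarrow> ('b \<Rightarrow> 'b \<Rightarrow> 'b) \<Rightarrow> 'b set \<Rightarrow> bool" where
  "lie_nilpotent sc br I \<longleftrightarrow> (\<exists>m. lower_central sc br I m = {0})"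

definition fitting_radical :: "('k::field \<Rightarrow> 'b::ab_group_add \<Rightarrow> 'b) \<Rightarrow> ('b \<Rightarrow> 'b \<Rightarrow> 'b) \<Rightarrow> 'b set \<Rightarrow> 'b set" where
  "fitting_radical sc br L = module.span sc (\<Union>{I. lie_ideal sc br L I \<and> lie_nilpotent sc br I})"

definition lin_indep_mod :: "('k::field \<Rightarrow> 'b::ab_group_add \<Rightarrow> 'b) \<Rightarrow> nat \<Rightarrow> (nat \<Rightarrow> 'b) \<Rightarrow> 'b set \<Rightarrow> bool" where
  "lin_indep_mod sc n c W \<longleftrightarrow>
     (\<forall>l::nat \<Rightarrow> 'k. (\<Sum>i<n. sc (l i) (c i)) \<in> W \<longrightarrow> (\<forall>i<n. l i = 0))"

definition fun_scale :: "'k::field \<Rightarrow> (nat \<Rightarrow> 'k) \<Rightarrow> (nat \<Rightarrow> 'k)" where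
  "fun_scale c f = (\<lambda>n. c * f n)"

text \<open>Test algebras are metabelian Lie brackets on the vector space nat \<Rightarrow> 'k; every
  finitely generated (hence countable-dimensional) metabelian Lie algebra over 'k embeds into
  such a one, so this is equivalent to the usual universal property.\<close>
definition free_metabelian_on :: "('k::field \<Rightarrow> 'b::ab_group_add \<Rightarrow> 'b) \<Rightarrow> ('b \<Rightarrow> 'b \<Rightarrow> 'b) \<Rightarrow> nat \<Rightarrow> (nat \<Rightarrow> 'b) \<Rightarrow> 'b set \<Rightarrow> bool" where
  "free_metabelian_on sc br r a A \<longleftrightarrow>
     lie_subalgebra sc br A \<and> metabelian_on br A \<and> (\<forall>i<r. a i \<in> A)
     \<and> A = \<Inter>{S. lie_subalgebra sc br S \<and> a ` {..<r} \<subseteq> S}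
     \<and> (\<forall>(br' :: (nat \<Rightarrow> 'k) \<Rightarrow> (nat \<Rightarrow> 'k) \<Rightarrow> (nat \<Rightarrow> 'k)) (m :: nat \<Rightarrow> (nat \<Rightarrow> 'k)).
          lie_algebra fun_scale br' \<and> metabelian_on br' UNIV \<longrightarrow>
          (\<exists>h. (\<forall>x\<in>A. \<forall>y\<in>A. h (x + y) = h x + h y \<and> h (br x y) = br' (h x) (h y))
             \<and> (\<forall>c. \<forall>x\<in>A. h (sc c x) = fun_scale c (h x))
             \<and> (\<forall>i<r. h (a i) = m i)))"

end

theory Submission
  imports Defs
begin

text \<open>By \<open>\<Phi>1\<close> and \<open>\<Phi>3\<close>, every element \<open>u\<close> of \<open>Fit(B)\<close> centralises \<open>B\<^sup>2\<close>: inside a nilpotent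
  ideal, bracketing repeatedly with \<open>u\<close> reaches a nonzero product \<open>p\<close> with \<open>pu = 0\<close>; as \<open>p\<close> also
  kills every product by \<open>\<Phi>1\<close>, \<open>\<Phi>3\<close> yields \<open>u(xy) = 0\<close>.
  In the free metabelian algebra \<open>F\<^sub>r\<close>, \<open>r \<ge> 2\<close>, the centraliser of \<open>F\<^sub>r\<^sup>2\<close> is \<open>F\<^sub>r\<^sup>2\<close> itself, an
  abelian ideal and hence part of \<open>Fit(F\<^sub>r)\<close>: if \<open>u = \<Sum> \<mu>\<^sub>i a\<^sub>i + w\<close> with \<open>w \<in> F\<^sub>r\<^sup>2\<close> and
  \<open>\<mu>\<^sub>j \<noteq> 0\<close>, the homomorphism onto the two-dimensional non-abelian Lie algebra sending
  \<open>a\<^sub>j \<mapsto> e\<^sub>0\<close>, \<open>a\<^sub>j\<^sub>' \<mapsto> e\<^sub>1\<close> and the other generators to 0 maps \<open>u(a\<^sub>j a\<^sub>j\<^sub>')\<close> to \<open>\<mu>\<^sub>j e\<^sub>1 \<noteq> 0\<close>.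
  Hence \<open>Fit(B) \<inter> F\<^sub>r \<subseteq> Fit(F\<^sub>r)\<close>.\<close>

context module
begin

lemma span_image_eq_sum:
  assumes "finite I" and "x \<in> span (v ` I)"
  shows "\<exists>\<mu>. x = (\<Sum>i\<in>I. \<mu> i *s v i)"
  using assms(2)
proof (induction rule: span_induct_alt)
  case base
  show ?case by (intro exI[of _ "\<lambda>_. 0"]) simp
next
  case (step c x y)
  then obtain i \<mu> where i: "i \<in> I" "x = v i" and y: "y = (\<Sum>i\<in>I. \<mu> i *s v i)" by blast
  have "(\<Sum>k\<in>I. (\<mu> k + (if k = i then c else 0)) *s v k) = c *s x + y"
    using i assms(1)
    by (simp add: y scale_left_distrib sum.distrib if_distrib[of "\<lambda>a. a *s _"] cong: if_cong)
  then show ?case by metis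
qed

lemma linear_functional_on_sum:
  fixes f :: "'b \<Rightarrow> 'a"
  assumes "subspace A"
    and add: "\<And>x y. x \<in> A \<Longrightarrow> y \<in> A \<Longrightarrow> f (x + y) = f x + f y"
    and scale: "\<And>c x. x \<in> A \<Longrightarrow> f (c *s x) = c * f x"
    and "finite I" and "\<And>i. i \<in> I \<Longrightarrow> v i \<in> A"
  shows "f (\<Sum>i\<in>I. \<mu> i *s v i) = (\<Sum>i\<in>I. \<mu> i * f (v i))"
  using assms(4,5)
proof (induction rule: finite_induct)
  case empty
  show ?case using scale[of 0 0] subspace_0[OF \<open>subspace A\<close>] by simp
next
  case (insert i I)
  have "(\<Sum>k\<in>I. \<mu> k *s v k) \<in> A"
    using insert by (intro subspace_sum[OF \<open>subspace A\<close>] subspace_scale[OF \<open>subspace A\<close>]) auto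
  moreover have "\<mu> i *s v i \<in> A" using insert by (intro subspace_scale[OF \<open>subspace A\<close>]) auto
  ultimately show ?case using insert add scale by simp
qed

lemma linear_functional_vanishes_on_span:
  assumes "subspace A" and "X \<subseteq> A"
    and add: "\<And>x y. x \<in> A \<Longrightarrow> y \<in> A \<Longrightarrow> f (x + y) = f x + f y"
    and scale: "\<And>c x. x \<in> A \<Longrightarrow> f (c *s x) = c * f x"
    and "\<And>x. x \<in> X \<Longrightarrow> f x = 0" and "y \<in> span X"
  shows "f y = 0"
proof -
  have "subspace {x \<in> A. f x = 0}"
    using \<open>subspace A\<close> add scale scale[of 0 0] by (auto simp: subspace_def)
  then have "span X \<subseteq> {x \<in> A. f x = 0}"
    using assms(2,5) by (intro span_minimal) auto
  then show ?thesis using \<open>y \<in> span X\<close> by blast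
qed

end

definition derived_algebra :: "('k::field \<Rightarrow> 'b::ab_group_add \<Rightarrow> 'b) \<Rightarrow> ('b \<Rightarrow> 'b \<Rightarrow> 'b) \<Rightarrow> 'b set \<Rightarrow> 'b set" where
  "derived_algebra sc br A = module.span sc {br x y | x y. x \<in> A \<and> y \<in> A}"

locale lie_alg =
  fixes sc :: "'k::field \<Rightarrow> 'b::ab_group_add \<Rightarrow> 'b" and br :: "'b \<Rightarrow> 'b \<Rightarrow> 'b"
  assumes lie_algebra: "lie_algebra sc br"
begin

sublocale vector_space sc
  using lie_algebra by (simp add: lie_algebra_def)

lemma bracket_add_left: "br (x + y) z = br x z + br y z"
  and bracket_add_right: "br x (y + z) = br x y + br x z"
  and bracket_scale_left: "br (sc c x) y = sc c (br x y)"
  and bracket_scale_right: "br x (sc c y) = sc c (br x y)"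
  and bracket_self: "br x x = 0"
  using lie_algebra by (simp_all add: lie_algebra_def)

lemma bracket_zero_left [simp]: "br 0 y = 0"
  using bracket_add_left[of 0 0 y] by simp

lemma bracket_zero_right [simp]: "br x 0 = 0"
  using bracket_add_right[of x 0 0] by simp

lemma bracket_antisym: "br x y = - br y x"
proof -
  have "0 = br (x + y) (x + y)" by (simp add: bracket_self)
  also have "\<dots> = br x y + br y x"
    unfolding bracket_add_left bracket_add_right by (simp add: bracket_self)
  finally show ?thesis by (metis eq_neg_iff_add_eq_0)
qed

lemma bracket_vanishes_on_spans:
  assumes "\<And>x y. x \<in> X \<Longrightarrow> y \<in> Y \<Longrightarrow> br x y = 0" and "x \<in> span X" and "y \<in> span Y"
  shows "br x y = 0"
proof -
  have "span Y \<subseteq> {y. br x y = 0}" if "x \<in> X" for x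
    using assms(1) that by (intro span_minimal subspaceI) (auto simp: bracket_add_right bracket_scale_right)
  then have "span X \<subseteq> {x. \<forall>y \<in> span Y. br x y = 0}"
    by (intro span_minimal subspaceI) (auto simp: bracket_add_left bracket_scale_left)
  then show ?thesis using assms(2,3) by blast
qed

lemma abelian_subspace_nilpotent:
  assumes "subspace S" and "\<And>x y. x \<in> S \<Longrightarrow> y \<in> S \<Longrightarrow> br x y = 0"
  shows "lie_nilpotent sc br S"
proof -
  have "{br x y | x y. x \<in> S \<and> y \<in> S} = {0}"
    using assms subspace_0[OF assms(1)] by force
  then have "lower_central sc br S (Suc 0) = {0}" by simp
  then show ?thesis unfolding lie_nilpotent_def by blast
qed

lemma ideal_element_kills_nonzero_product:
  assumes "lie_ideal sc br UNIV I" and "lie_nilpotent sc br I" and "x \<in> I" and "br y x \<noteq> 0"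
  shows "\<exists>s t. br s t \<noteq> 0 \<and> br (br s t) x = 0"
proof -
  define g where "g k = ((\<lambda>v. br v x) ^^ k) (br y x)" for k
  have g_lower_central: "g k \<in> lower_central sc br I k" for k
  proof (induction k)
    case 0
    show ?case using assms(1,3) by (simp add: g_def lie_ideal_def)
  next
    case (Suc k)
    then show ?case using assms(3) by (auto simp: g_def intro!: span_base)
  qed
  obtain m where "g m = 0"
    using assms(2) g_lower_central unfolding lie_nilpotent_def by (metis singletonD)
  then have "\<exists>k. g k \<noteq> 0 \<and> g (Suc k) = 0"
  proof (induction m)
    case 0
    then show ?case using assms(4) by (simp add: g_def)
  next
    case (Suc m)
    then show ?case by (cases "g m = 0") blast+
  qed
  then obtain k where "g k \<noteq> 0" and "br (g k) x = 0" by (auto simp: g_def)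
  moreover obtain s t where "g k = br s t" by (cases k) (auto simp: g_def)
  ultimately show ?thesis by auto
qed

lemma nilpotent_ideal_centralizes_brackets:
  assumes Phi1: "\<forall>x1 x2 x3 x4. br (br x1 x2) (br x3 x4) = 0"
    and Phi3: "\<forall>x y z. x \<noteq> 0 \<and> br x y = 0 \<and> br x z = 0 \<longrightarrow> br y z = 0"
    and "lie_ideal sc br UNIV I" and "lie_nilpotent sc br I" and "x \<in> I"
  shows "br x (br p q) = 0"
proof (cases "\<exists>y. br y x \<noteq> 0")
  case False
  then show ?thesis using bracket_antisym[of x "br p q"] by simp
next
  case True
  then obtain s t where "br s t \<noteq> 0" and "br (br s t) x = 0"
    using ideal_element_kills_nonzero_product assms(3-5) by blast
  moreover have "br (br s t) (br p q) = 0" using Phi1 by blast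
  ultimately show ?thesis using Phi3 by blast
qed

lemma fitting_radical_centralizes_brackets:
  assumes Phi1: "\<forall>x1 x2 x3 x4. br (br x1 x2) (br x3 x4) = 0"
    and Phi3: "\<forall>x y z. x \<noteq> 0 \<and> br x y = 0 \<and> br x z = 0 \<longrightarrow> br y z = 0"
    and "u \<in> fitting_radical sc br UNIV"
  shows "br u (br p q) = 0"
proof -
  have "subspace {x. br x (br p q) = 0}"
    by (rule subspaceI) (auto simp: bracket_add_left bracket_scale_left)
  moreover have "\<Union>{I. lie_ideal sc br UNIV I \<and> lie_nilpotent sc br I} \<subseteq> {x. br x (br p q) = 0}"
    using nilpotent_ideal_centralizes_brackets[OF Phi1 Phi3] by blast
  ultimately show ?thesis
    using assms(3) span_minimal unfolding fitting_radical_def by blast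
qed

lemma derived_algebra_subset:
  assumes "lie_subalgebra sc br A"
  shows "derived_algebra sc br A \<subseteq> A"
  using assms unfolding derived_algebra_def lie_subalgebra_def by (intro span_minimal) auto

lemma derived_algebra_subset_fitting_radical:
  assumes "lie_subalgebra sc br A" and "metabelian_on br A"
  shows "derived_algebra sc br A \<subseteq> fitting_radical sc br A"
proof -
  let ?P = "{br x y | x y. x \<in> A \<and> y \<in> A}"
  let ?D = "derived_algebra sc br A"
  have "?D \<subseteq> A" by (rule derived_algebra_subset[OF assms(1)])
  have "br x y = 0" if "x \<in> ?D" and "y \<in> ?D" for x y
    by (rule bracket_vanishes_on_spans[where X = ?P and Y = ?P])
      (use assms(2) that in \<open>auto simp: metabelian_on_def derived_algebra_def\<close>)
  then have "lie_nilpotent sc br ?D"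
    by (intro abelian_subspace_nilpotent) (simp_all add: derived_algebra_def)
  moreover have "lie_ideal sc br A ?D"
    unfolding lie_ideal_def
  proof (intro conjI ballI)
    show "subspace ?D" by (simp add: derived_algebra_def)
    show "?D \<subseteq> A" by fact
    show "br x y \<in> ?D" if "x \<in> A" and "y \<in> ?D" for x y
      using that \<open>?D \<subseteq> A\<close> unfolding derived_algebra_def by (blast intro: span_base)
  qed
  ultimately have "?D \<subseteq> \<Union>{I. lie_ideal sc br A I \<and> lie_nilpotent sc br I}" by blast
  then show ?thesis
    unfolding fitting_radical_def using span_superset by blast
qed

lemma generated_subalgebra_decomp:
  assumes "lie_subalgebra sc br A" and "A = \<Inter>{S. lie_subalgebra sc br S \<and> G \<subseteq> S}" and "x \<in> A"
  shows "\<exists>s w. s \<in> span G \<and> w \<in> derived_algebra sc br A \<and> x = s + w"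
proof -
  let ?P = "{br x y | x y. x \<in> A \<and> y \<in> A}"
  have "G \<subseteq> A" using assms(2) by blast
  then have "span (G \<union> ?P) \<subseteq> A"
    using assms(1) unfolding lie_subalgebra_def by (intro span_minimal) auto
  then have "lie_subalgebra sc br (span (G \<union> ?P))"
    unfolding lie_subalgebra_def by (blast intro: span_base)
  then have "A \<subseteq> span (G \<union> ?P)"
    using assms(2) span_superset by blast
  then show ?thesis
    using assms(3) unfolding span_Un derived_algebra_def by blast
qed

end

definition lie_hom_on ::
    "('k::field \<Rightarrow> 'b::ab_group_add \<Rightarrow> 'b) \<Rightarrow> ('b \<Rightarrow> 'b \<Rightarrow> 'b)
      \<Rightarrow> ('k \<Rightarrow> 'c::ab_group_add \<Rightarrow> 'c) \<Rightarrow> ('c \<Rightarrow> 'c \<Rightarrow> 'c) \<Rightarrow> 'b set \<Rightarrow> ('b \<Rightarrow> 'c) \<Rightarrow> bool" where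
  "lie_hom_on sc br sc' br' A h \<longleftrightarrow>
     (\<forall>x\<in>A. \<forall>y\<in>A. h (x + y) = h x + h y \<and> h (br x y) = br' (h x) (h y))
     \<and> (\<forall>c. \<forall>x\<in>A. h (sc c x) = sc' c (h x))"

lemma free_metabelian_on_extend:
  fixes br' :: "(nat \<Rightarrow> 'k::field) \<Rightarrow> (nat \<Rightarrow> 'k) \<Rightarrow> (nat \<Rightarrow> 'k)"
  assumes "free_metabelian_on sc br r a A"
    and "lie_algebra fun_scale br'" and "metabelian_on br' UNIV"
  obtains h where "lie_hom_on sc br fun_scale br' A h" and "\<And>i. i < r \<Longrightarrow> h (a i) = m i"
proof -
  have "\<exists>h. (\<forall>x\<in>A. \<forall>y\<in>A. h (x + y) = h x + h y \<and> h (br x y) = br' (h x) (h y))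
      \<and> (\<forall>c. \<forall>x\<in>A. h (sc c x) = fun_scale c (h x)) \<and> (\<forall>i<r. h (a i) = m i)"
    using assms unfolding free_metabelian_on_def by blast
  then show ?thesis using that unfolding lie_hom_on_def by blast
qed

lemma lie_hom_on_bracket:
  "lie_hom_on sc br sc' br' A h \<Longrightarrow> x \<in> A \<Longrightarrow> y \<in> A \<Longrightarrow> h (br x y) = br' (h x) (h y)"
  by (simp add: lie_hom_on_def)

lemma lie_hom_on_coordinate_add:
  "lie_hom_on sc br fun_scale br' A h \<Longrightarrow> x \<in> A \<Longrightarrow> y \<in> A \<Longrightarrow> h (x + y) k = h x k + h y k"
  by (simp add: lie_hom_on_def)

lemma lie_hom_on_coordinate_scale:
  "lie_hom_on sc br fun_scale br' A h \<Longrightarrow> x \<in> A \<Longrightarrow> h (sc c x) k = c * h x k"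
  by (simp add: lie_hom_on_def fun_scale_def)

text \<open>The two-dimensional non-abelian Lie algebra \<open>[e\<^sub>0, e\<^sub>1] = e\<^sub>1\<close>, placed in coordinates 0 and 1
  of the test space \<open>nat \<Rightarrow> 'k\<close>; the other coordinates play no role.\<close>

definition aff1_bracket :: "(nat \<Rightarrow> 'k::field) \<Rightarrow> (nat \<Rightarrow> 'k) \<Rightarrow> (nat \<Rightarrow> 'k)" where
  "aff1_bracket f g = (\<lambda>k. if k = 1 then f 0 * g 1 - f 1 * g 0 else 0)"

lemma lie_algebra_aff1: "lie_algebra fun_scale (aff1_bracket :: (nat \<Rightarrow> 'k::field) \<Rightarrow> _)"
  unfolding lie_algebra_def
proof (intro conjI allI)
  show "vector_space (fun_scale :: 'k \<Rightarrow> _)"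
    by unfold_locales (auto simp: fun_scale_def fun_eq_iff algebra_simps)
qed (auto simp: aff1_bracket_def fun_scale_def fun_eq_iff algebra_simps)

lemma metabelian_aff1: "metabelian_on aff1_bracket UNIV"
  unfolding metabelian_on_def aff1_bracket_def by (auto simp: fun_eq_iff)

context lie_alg
begin

lemma aff1_hom_derived_algebra_coordinate0:
  assumes "lie_subalgebra sc br A" and h: "lie_hom_on sc br fun_scale aff1_bracket A h"
    and "w \<in> derived_algebra sc br A"
  shows "h w 0 = 0"
proof -
  let ?P = "{br x y | x y. x \<in> A \<and> y \<in> A}"
  have A: "subspace A" and P: "?P \<subseteq> A"
    using assms(1) by (auto simp: lie_subalgebra_def)
  have brackets: "h x 0 = 0" if "x \<in> ?P" for x
    using that lie_hom_on_bracket[OF h] by (auto simp: aff1_bracket_def)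
  have "w \<in> span ?P"
    using assms(3) by (simp add: derived_algebra_def)
  then show ?thesis
    using linear_functional_vanishes_on_span[where f = "\<lambda>x. h x 0", OF A P
        lie_hom_on_coordinate_add[OF h] lie_hom_on_coordinate_scale[OF h] brackets] by simp
qed

lemma free_metabelian_coefficient_vanishes:
  assumes free: "free_metabelian_on sc br r a A"
    and "j < r" and "j' < r" and "j \<noteq> j'" and w: "w \<in> derived_algebra sc br A"
    and central: "br ((\<Sum>i<r. sc (\<mu> i) (a i)) + w) (br (a j) (a j')) = 0"
  shows "\<mu> j = 0"
proof -
  define s where "s = (\<Sum>i<r. sc (\<mu> i) (a i))"
  define e :: "nat \<Rightarrow> nat \<Rightarrow> 'k" where "e k = (\<lambda>n. if n = k then 1 else 0)" for k
  have sub: "lie_subalgebra sc br A" and "subspace A" and a: "\<And>i. i < r \<Longrightarrow> a i \<in> A"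
    using free unfolding free_metabelian_on_def lie_subalgebra_def by auto
  obtain h where h: "lie_hom_on sc br fun_scale aff1_bracket A h"
    and ha: "\<And>i. i < r \<Longrightarrow> h (a i) = (if i = j then e 0 else if i = j' then e 1 else 0)"
    by (rule free_metabelian_on_extend[where m = "\<lambda>i. if i = j then e 0 else if i = j' then e 1 else 0",
          OF free lie_algebra_aff1 metabelian_aff1]) blast
  have "s \<in> A" and "w \<in> A"
    unfolding s_def using a w derived_algebra_subset[OF sub] \<open>subspace A\<close>
    by (auto intro!: subspace_sum subspace_scale)
  have "h s 0 = (\<Sum>i<r. \<mu> i * h (a i) 0)"
    unfolding s_def using a
    by (intro linear_functional_on_sum[where f = "\<lambda>x. h x 0", OF \<open>subspace A\<close>
          lie_hom_on_coordinate_add[OF h] lie_hom_on_coordinate_scale[OF h]]) auto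
  also have "\<dots> = (\<Sum>i<r. if i = j then \<mu> i else 0)"
    using \<open>j \<noteq> j'\<close> by (intro sum.cong) (auto simp: ha e_def)
  also have "\<dots> = \<mu> j"
    using \<open>j < r\<close> by simp
  finally have "h (s + w) 0 = \<mu> j"
    using aff1_hom_derived_algebra_coordinate0[OF sub h w]
      lie_hom_on_coordinate_add[OF h \<open>s \<in> A\<close> \<open>w \<in> A\<close>] by simp
  moreover have "h (br (s + w) (br (a j) (a j'))) 1 = h (s + w) 0"
    using sub a \<open>j < r\<close> \<open>j' < r\<close> \<open>j \<noteq> j'\<close> \<open>s \<in> A\<close> \<open>w \<in> A\<close>
    by (simp add: lie_subalgebra_def subspace_add lie_hom_on_bracket[OF h] ha aff1_bracket_def e_def)
  moreover have "h 0 = 0"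
    using lie_hom_on_coordinate_scale[OF h subspace_0[OF \<open>subspace A\<close>], of 0] by (simp add: fun_eq_iff)
  ultimately show ?thesis using central unfolding s_def by simp
qed

lemma free_metabelian_centralizer_of_derived:
  assumes free: "free_metabelian_on sc br r a A" and "2 \<le> r" and "u \<in> A"
    and central: "\<And>p q. p \<in> A \<Longrightarrow> q \<in> A \<Longrightarrow> br u (br p q) = 0"
  shows "u \<in> derived_algebra sc br A"
proof -
  have sub: "lie_subalgebra sc br A" and gen: "A = \<Inter>{S. lie_subalgebra sc br S \<and> a ` {..<r} \<subseteq> S}"
    and a: "\<And>i. i < r \<Longrightarrow> a i \<in> A"
    using free unfolding free_metabelian_on_def by auto
  obtain s w where "s \<in> span (a ` {..<r})" and w: "w \<in> derived_algebra sc br A" and "u = s + w"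
    using generated_subalgebra_decomp[OF sub gen \<open>u \<in> A\<close>] by blast
  obtain \<mu> where s: "s = (\<Sum>i<r. sc (\<mu> i) (a i))"
    using span_image_eq_sum[OF finite_lessThan \<open>s \<in> span (a ` {..<r})\<close>] by blast
  have "\<mu> j = 0" if "j < r" for j
  proof -
    define j' where "j' = (if j = 0 then 1 else 0 :: nat)"
    have "j' < r" and "j' \<noteq> j" using \<open>2 \<le> r\<close> by (auto simp: j'_def)
    then show ?thesis
      using free_metabelian_coefficient_vanishes[OF free \<open>j < r\<close> _ _ w] central a \<open>j < r\<close>
        \<open>u = s + w\<close> s by metis
  qed
  then have "s = 0" unfolding s by simp
  then show ?thesis using w \<open>u = s + w\<close> by simp
qed

lemma fitting_radical_inter_free_metabelian:
  assumes "free_metabelian_on sc br r a A" and "2 \<le> r"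
    and Phi1: "\<forall>x1 x2 x3 x4. br (br x1 x2) (br x3 x4) = 0"
    and Phi3: "\<forall>x y z. x \<noteq> 0 \<and> br x y = 0 \<and> br x z = 0 \<longrightarrow> br y z = 0"
  shows "fitting_radical sc br UNIV \<inter> A \<subseteq> fitting_radical sc br A"
proof -
  have "lie_subalgebra sc br A" and "metabelian_on br A"
    using assms(1) unfolding free_metabelian_on_def by auto
  moreover have "fitting_radical sc br UNIV \<inter> A \<subseteq> derived_algebra sc br A"
    using free_metabelian_centralizer_of_derived[OF assms(1,2)]
      fitting_radical_centralizes_brackets[OF Phi1 Phi3] by blast
  ultimately show ?thesis
    using derived_algebra_subset_fitting_radical by blast
qed

end

theorem lemma3p5:
  fixes sc :: "'k::field \<Rightarrow> 'b::ab_group_add \<Rightarrow> 'b"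
    and br :: "'b \<Rightarrow> 'b \<Rightarrow> 'b"
    and r n :: nat and a c :: "nat \<Rightarrow> 'b" and A :: "'b set"
  assumes "lie_algebra sc br"
    and "r \<ge> 2"
    and "free_metabelian_on sc br r a A"
    and Phi1: "\<forall>x1 x2 x3 x4. br (br x1 x2) (br x3 x4) = 0"
    and Phi2: "\<forall>x y. br (br x y) x = 0 \<and> br (br x y) y = 0 \<longrightarrow> br x y = 0"
    and Phi3: "\<forall>x y z. x \<noteq> 0 \<and> br x y = 0 \<and> br x z = 0 \<longrightarrow> br y z = 0"
    and "n \<le> r"
    and "\<forall>i<n. c i \<in> A"
    and "lin_indep_mod sc n c (fitting_radical sc br A)"
  shows "lin_indep_mod sc n c (fitting_radical sc br UNIV)"
  unfolding lin_indep_mod_def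
proof (rule allI, rule impI)
  interpret lie_alg sc br by unfold_locales fact
  fix l assume fit: "(\<Sum>i<n. sc (l i) (c i)) \<in> fitting_radical sc br UNIV"
  have "subspace A"
    using assms(3) unfolding free_metabelian_on_def lie_subalgebra_def by blast
  then have "(\<Sum>i<n. sc (l i) (c i)) \<in> A"
    using assms(8) by (auto intro!: subspace_sum subspace_scale)
  then have "(\<Sum>i<n. sc (l i) (c i)) \<in> fitting_radical sc br A"
    using fit fitting_radical_inter_free_metabelian[OF assms(3,2) Phi1 Phi3] by blast
  then show "\<forall>i<n. l i = 0"
    using assms(9) unfolding lin_indep_mod_def by blast
qed

end
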